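(* Let $A$ be a finitely generated associative algebra with $M_N(A)=0$ for some $N$. For $a,b,d\in A$ and $m\in M_k(A)$, the element $[b,d][a,m]+[a,d][b,m]$ lies in $M_{k+2}(A)$.
   Context: $L_1=A$, $L_k=[A,L_{k-1}]$, $M_k=AL_kA$ (two-sided ideal generated by $L_k$). *)

theory Defs
  imports Main
begin

text \<open>An associative unital algebra over a commutative ring 'k: the ring structure
  is that of the type 'a, and sm is the scalar multiplication.\<close>

definition is_algebra :: "('k::comm_ring_1 \<Rightarrow> 'a::ring_1 \<Rightarrow> 'a) \<Rightarrow> bool" where
  "is_algebra sm \<longleftrightarrow>
     (\<forall>c x y. sm c (x + y) = sm c x + sm c y) \<and>
     (\<forall>c d x. sm (c + d) x = sm c x + sm d x) \<and>
     (\<forall>c d x. sm (c * d) x = sm c (sm d x)) \<and>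
     (\<forall>x. sm 1 x = x) \<and>
     (\<forall>c x y. sm c (x * y) = sm c x * y) \<and>
     (\<forall>c x y. sm c (x * y) = x * sm c y)"

inductive_set gen_subalg :: "('k::comm_ring_1 \<Rightarrow> 'a::ring_1 \<Rightarrow> 'a) \<Rightarrow> 'a set \<Rightarrow> 'a set"
  for sm S where
  gen: "x \<in> S \<Longrightarrow> x \<in> gen_subalg sm S"
| one: "1 \<in> gen_subalg sm S"
| add: "x \<in> gen_subalg sm S \<Longrightarrow> y \<in> gen_subalg sm S \<Longrightarrow> x + y \<in> gen_subalg sm S"
| mult: "x \<in> gen_subalg sm S \<Longrightarrow> y \<in> gen_subalg sm S \<Longrightarrow> x * y \<in> gen_subalg sm S"
| smult: "x \<in> gen_subalg sm S \<Longrightarrow> sm c x \<in> gen_subalg sm S"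

definition fin_gen :: "('k::comm_ring_1 \<Rightarrow> 'a::ring_1 \<Rightarrow> 'a) \<Rightarrow> bool" where
  "fin_gen sm \<longleftrightarrow> (\<exists>S. finite S \<and> gen_subalg sm S = UNIV)"

inductive_set lin_span :: "('k::comm_ring_1 \<Rightarrow> 'a::ring_1 \<Rightarrow> 'a) \<Rightarrow> 'a set \<Rightarrow> 'a set"
  for sm S where
  zero: "0 \<in> lin_span sm S"
| gen: "x \<in> S \<Longrightarrow> x \<in> lin_span sm S"
| add: "x \<in> lin_span sm S \<Longrightarrow> y \<in> lin_span sm S \<Longrightarrow> x + y \<in> lin_span sm S"
| smult: "x \<in> lin_span sm S \<Longrightarrow> sm c x \<in> lin_span sm S"

inductive_set ideal_gen :: "('k::comm_ring_1 \<Rightarrow> 'a::ring_1 \<Rightarrow> 'a) \<Rightarrow> 'a set \<Rightarrow> 'a set"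
  for sm S where
  zero: "0 \<in> ideal_gen sm S"
| gen: "x \<in> S \<Longrightarrow> x \<in> ideal_gen sm S"
| add: "x \<in> ideal_gen sm S \<Longrightarrow> y \<in> ideal_gen sm S \<Longrightarrow> x + y \<in> ideal_gen sm S"
| smult: "x \<in> ideal_gen sm S \<Longrightarrow> sm c x \<in> ideal_gen sm S"
| lmult: "x \<in> ideal_gen sm S \<Longrightarrow> a * x \<in> ideal_gen sm S"
| rmult: "x \<in> ideal_gen sm S \<Longrightarrow> x * a \<in> ideal_gen sm S"

definition comm :: "'a::ring \<Rightarrow> 'a \<Rightarrow> 'a" where
  "comm a b = a * b - b * a"

text \<open>Lower central series: L 1 = A, L (k+1) = [A, L k] (linear span of commutators).
  Index 0 is a dummy (set equal to A).\<close>
fun LCS :: "('k::comm_ring_1 \<Rightarrow> 'a::ring_1 \<Rightarrow> 'a) \<Rightarrow> nat \<Rightarrow> 'a set" where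
  "LCS sm 0 = UNIV"
| "LCS sm (Suc 0) = UNIV"
| "LCS sm (Suc (Suc n)) = lin_span sm {comm a x | a x. x \<in> LCS sm (Suc n)}"

definition MI :: "('k::comm_ring_1 \<Rightarrow> 'a::ring_1 \<Rightarrow> 'a) \<Rightarrow> nat \<Rightarrow> 'a set" where
  "MI sm k = ideal_gen sm (LCS sm k)"

end

theory Submission imports Defs begin

text \<open>Write \<open>f(m) = [b,d][a,m] + [a,d][b,m]\<close>. Since \<open>M\<^sub>k\<close> is spanned by products \<open>x l\<close>
  with \<open>l \<in> L\<^sub>k\<close>, and \<open>f(x l) = f(x) l + f\<^sub>d\<^sub>x(l) - d f\<^sub>x(l)\<close> (subscript = the element in the
  \<open>d\<close>-slot), it suffices to show \<open>f(l) \<in> M\<^sub>k\<^sub>+\<^sub>2\<close> and \<open>f(x) l \<in> M\<^sub>k\<^sub>+\<^sub>2\<close> for \<open>l \<in> L\<^sub>k\<close>. The first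
  follows by expanding \<open>[d,[ab,l]]\<close> with the Leibniz rule. For the second, \<open>l\<close> is a sum of
  commutators \<open>[c,\<lambda>]\<close> with \<open>\<lambda> \<in> L\<^sub>k\<^sub>-\<^sub>1\<close>, all of whose triple commutators lie in \<open>L\<^sub>k\<^sub>+\<^sub>2\<close>; a
  purely ring-theoretic computation modulo the ideal of these triple commutators then
  shows \<open>f(x) [c,\<lambda>] \<equiv> 0\<close>.\<close>

section \<open>Commutator computations modulo an ideal\<close>

definition two_sided_ideal :: "'a::ring_1 set \<Rightarrow> bool" where
  "two_sided_ideal I \<longleftrightarrow> 0 \<in> I \<and> (\<forall>x\<in>I. \<forall>y\<in>I. x + y \<in> I) \<and> (\<forall>x\<in>I. \<forall>a. a * x \<in> I \<and> x * a \<in> I)"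

lemma ideal_add: "two_sided_ideal I \<Longrightarrow> x \<in> I \<Longrightarrow> y \<in> I \<Longrightarrow> x + y \<in> I"
  unfolding two_sided_ideal_def by blast

lemma ideal_mult_left: "two_sided_ideal I \<Longrightarrow> x \<in> I \<Longrightarrow> a * x \<in> I"
  unfolding two_sided_ideal_def by blast

lemma ideal_mult_right: "two_sided_ideal I \<Longrightarrow> x \<in> I \<Longrightarrow> x * a \<in> I"
  unfolding two_sided_ideal_def by blast

lemma ideal_uminus: "two_sided_ideal I \<Longrightarrow> x \<in> I \<Longrightarrow> - x \<in> I"
  using ideal_mult_left[of I x "- 1"] by simp

lemma ideal_diff: "two_sided_ideal I \<Longrightarrow> x \<in> I \<Longrightarrow> y \<in> I \<Longrightarrow> x - y \<in> I"
  using ideal_add[of I x "- y"] ideal_uminus[of I y] by simp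

lemma ideal_comm: "two_sided_ideal I \<Longrightarrow> x \<in> I \<Longrightarrow> comm a x \<in> I"
  unfolding comm_def by (intro ideal_diff ideal_mult_left ideal_mult_right)

lemma two_sided_ideal_ideal_gen: "two_sided_ideal (ideal_gen sm S)"
  unfolding two_sided_ideal_def by (auto intro: ideal_gen.intros)

definition sym_comm_prod :: "'a::ring \<Rightarrow> 'a \<Rightarrow> 'a \<Rightarrow> 'a \<Rightarrow> 'a" where
  "sym_comm_prod a b d m = comm b d * comm a m + comm a d * comm b m"

lemma sym_comm_prod_add:
  "sym_comm_prod a b d (u + v) = sym_comm_prod a b d u + sym_comm_prod a b d v"
  by (simp add: sym_comm_prod_def comm_def algebra_simps)

lemma sym_comm_prod_mult:
  "sym_comm_prod a b d (x * l) =
     sym_comm_prod a b d x * l + sym_comm_prod a b (d * x) l - d * sym_comm_prod a b x l"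
  by (simp add: sym_comm_prod_def comm_def algebra_simps)

lemma sym_comm_prod_in_ideal:
  assumes I: "two_sided_ideal I" and l: "\<And>p q. comm p (comm q l) \<in> I"
  shows "sym_comm_prod a b d l \<in> I"
proof -
  have "sym_comm_prod a b d l =
      comm (- d) (comm (a * b) l) - a * comm (- d) (comm b l) - comm (- d) (comm a l) * b
      - comm (- comm b d) (comm a l)"
    by (simp add: sym_comm_prod_def comm_def algebra_simps)
  then show ?thesis
    by (simp only:) (intro ideal_diff ideal_mult_left ideal_mult_right I l)
qed

locale triple_comm_ideal =
  fixes I :: "'a::ring_1 set" and L :: 'a
  assumes ideal: "two_sided_ideal I"
    and triple_comm: "\<And>p q r. comm p (comm q (comm r L)) \<in> I"
begin

lemma comm_commutator_comm: "comm (comm p q) (comm r L) \<in> I"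
proof -
  have "comm (comm p q) (comm r L) = comm p (comm q (comm r L)) - comm q (comm p (comm r L))"
    by (simp add: comm_def algebra_simps)
  then show ?thesis using ideal_diff[OF ideal triple_comm triple_comm] by simp
qed

lemma comm_double_commutator_comm: "comm (comm (comm p q) r) (comm c L) \<in> I"
proof -
  have "comm (comm (comm p q) r) (comm c L) =
      comm (comm p q) (comm r (comm c L)) - comm r (comm (comm p q) (comm c L))"
    by (simp add: comm_def algebra_simps)
  then show ?thesis
    by (simp only:) (intro ideal_diff ideal_comm ideal triple_comm comm_commutator_comm)
qed

lemma antisym_middle: "comm r s * comm t (comm z L) + comm r t * comm s (comm z L) \<in> I"
proof -
  have "comm r s * comm t (comm z L) + comm r t * comm s (comm z L) =
      comm r (comm (s * t) (comm z L)) - s * comm r (comm t (comm z L))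
      - comm r (comm s (comm z L)) * t + comm (comm r t) (comm s (comm z L))"
    by (simp add: comm_def algebra_simps)
  then show ?thesis
    by (simp only:) (intro ideal_add ideal_diff ideal_mult_left ideal_mult_right ideal triple_comm)
qed

lemma antisym_outer: "comm r s * comm t (comm z L) + comm t s * comm r (comm z L) \<in> I"
proof -
  have "comm r s * comm t (comm z L) + comm t s * comm r (comm z L) =
      - (comm s r * comm t (comm z L) + comm s t * comm r (comm z L))"
    by (simp add: comm_def algebra_simps)
  then show ?thesis by (simp only:) (intro ideal_uminus ideal antisym_middle)
qed

lemma commutator_prod: "comm (comm p q) s * comm t (comm z L) \<in> I"
proof -
  have swapped: "comm t s * comm (comm p q) (comm z L) \<in> I"
    by (intro ideal_mult_left ideal comm_commutator_comm)
  show ?thesis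
    using ideal_diff[OF ideal antisym_outer[of "comm p q" s t z] swapped] by simp
qed

lemma antisym_last: "comm (comm p q) r * comm c L + comm (comm p q) c * comm r L \<in> I"
proof -
  have "comm (comm p q) r * comm c L + comm (comm p q) c * comm r L =
      comm (comm p q) (comm (r * c) L) - comm (comm p q) (comm r L) * c
      + comm (comm (comm p q) c) (comm r L) - r * comm (comm p q) (comm c L)"
    by (simp add: comm_def algebra_simps)
  then show ?thesis
    by (simp only:) (intro ideal_add ideal_diff ideal_mult_left ideal_mult_right ideal
        comm_commutator_comm comm_double_commutator_comm)
qed

lemma antisym_second: "comm (comm p q) r * comm s L + comm (comm p s) r * comm q L \<in> I"
proof -
  have "comm (comm p q) r * comm s L + comm (comm p s) r * comm q L =
      - comm r (comm p (comm (q * s) L)) + comm (comm (comm p s) r) (comm q L)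
      + (comm p q * comm r (comm s L) + comm r q * comm p (comm s L))
      + (comm r s * comm p (comm q L) + comm p s * comm r (comm q L))
      + q * comm r (comm p (comm s L)) + comm r (comm p (comm q L)) * s
      - comm (comm r s) (comm p (comm q L)) - comm (comm p s) (comm r (comm q L))"
    by (simp add: comm_def algebra_simps)
  then show ?thesis
    by (simp only:) (intro ideal_add ideal_diff ideal_uminus ideal_mult_left ideal_mult_right
        ideal triple_comm comm_double_commutator_comm antisym_outer)
qed

lemma exchange: "comm (comm p x) d * comm c L - comm (comm x c) d * comm p L \<in> I"
proof -
  have "comm (comm p x) d * comm c L - comm (comm x c) d * comm p L =
      - (comm (comm x p) d * comm c L + comm (comm x c) d * comm p L)"
    by (simp add: comm_def algebra_simps)
  then show ?thesis by (simp only:) (intro ideal_uminus ideal antisym_second)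
qed

lemma sym_comm_prod_mult_comm: "sym_comm_prod a b d x * comm c L \<in> I"
proof -
  define U where "U p q r s = comm (comm p q) r * comm s L" for p q r s
  define W where "W r s t z = comm r s * comm t (comm z L)" for r s t z
  have exch: "U p x d c - U x c d p \<in> I" for p
    unfolding U_def by (rule exchange)
  have commutators: "W (comm a x) d b c \<in> I" "W (comm d b) a x c \<in> I" "W (comm d b) a c x \<in> I"
    "W (comm a x) c b d \<in> I" "W (comm a x) c d b \<in> I"
    unfolding W_def by (rule commutator_prod)+
  have "U a x (comm b d) c + U a x c (comm b d) \<in> I"
    unfolding U_def by (rule antisym_last)
  moreover have "U a x (comm b d) c =
      (U a x (comm b d) c + U a x c (comm b d)) - (W (comm a x) c b d - W (comm a x) c d b)"
    by (simp add: U_def W_def comm_def algebra_simps)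
  ultimately have Uabd: "U a x (comm b d) c \<in> I"
    using commutators by (metis ideal ideal_diff)
  have "U (comm x c) d a b = (U (comm x c) d a b - U d b a (comm x c))
      + (W (comm d b) a x c - W (comm d b) a c x)"
    by (simp add: U_def W_def comm_def algebra_simps)
  moreover have "U (comm x c) d a b - U d b a (comm x c) \<in> I"
    unfolding U_def by (rule exchange)
  ultimately have Uxcd: "U (comm x c) d a b \<in> I"
    using commutators by (metis ideal ideal_add ideal_diff)
  have "sym_comm_prod a b d x * comm c L =
      (U (a * b) x d c - U x c d (a * b)) - a * (U b x d c - U x c d b)
      - (U a x d c - U x c d a) * b - W (comm a x) d b c - U a x (comm b d) c
      + U (comm x c) d a b"
    by (simp add: sym_comm_prod_def U_def W_def comm_def algebra_simps)
  moreover have "(U (a * b) x d c - U x c d (a * b)) - a * (U b x d c - U x c d b)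
      - (U a x d c - U x c d a) * b - W (comm a x) d b c - U a x (comm b d) c
      + U (comm x c) d a b \<in> I"
    by (intro ideal_add ideal_diff ideal_mult_left ideal_mult_right ideal exch commutators(1)
        Uabd Uxcd)
  ultimately show ?thesis by simp
qed

end

section \<open>Linear spans, the lower central series and its ideals\<close>

lemma sm_mult_left: "is_algebra sm \<Longrightarrow> a * sm c x = sm c (a * x)"
  unfolding is_algebra_def by metis

lemma sm_mult_right: "is_algebra sm \<Longrightarrow> sm c x * a = sm c (x * a)"
  unfolding is_algebra_def by metis

lemma sm_add: "is_algebra sm \<Longrightarrow> sm c (x + y) = sm c x + sm c y"
  unfolding is_algebra_def by metis

lemma sm_diff: "is_algebra sm \<Longrightarrow> sm c (x - y) = sm c x - sm c y"
  using sm_add[of sm c "x - y" y] by (simp add: eq_diff_eq)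

lemma comm_sm: "is_algebra sm \<Longrightarrow> comm a (sm c x) = sm c (comm a x)"
  by (simp add: comm_def sm_mult_left sm_mult_right sm_diff)

lemma sym_comm_prod_sm:
  "is_algebra sm \<Longrightarrow> sym_comm_prod a b d (sm c m) = sm c (sym_comm_prod a b d m)"
  by (simp add: sym_comm_prod_def comm_sm sm_mult_left sm_add)

lemma lin_span_mono: "x \<in> lin_span sm S \<Longrightarrow> S \<subseteq> T \<Longrightarrow> x \<in> lin_span sm T"
  by (induction rule: lin_span.induct) (auto intro: lin_span.intros)

lemma lin_span_mult_left:
  assumes "is_algebra sm" and "\<And>y. y \<in> S \<Longrightarrow> a * y \<in> lin_span sm S"
  shows "x \<in> lin_span sm S \<Longrightarrow> a * x \<in> lin_span sm S"
  by (induction rule: lin_span.induct)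
    (simp_all add: distrib_left sm_mult_left[OF assms(1)] assms(2) lin_span.intros)

lemma lin_span_mult_right:
  assumes "is_algebra sm" and "\<And>y. y \<in> S \<Longrightarrow> y * a \<in> lin_span sm S"
  shows "x \<in> lin_span sm S \<Longrightarrow> x * a \<in> lin_span sm S"
  by (induction rule: lin_span.induct)
    (simp_all add: distrib_right sm_mult_right[OF assms(1)] assms(2) lin_span.intros)

lemma linear_image_lin_span_in_ideal_gen:
  assumes x: "x \<in> lin_span sm S"
    and add: "\<And>x y. g (x + y) = g x + g y"
    and smult: "\<And>c x. g (sm c x) = sm c (g x)"
    and gen: "\<And>x. x \<in> S \<Longrightarrow> g x \<in> ideal_gen sm T"
  shows "g x \<in> ideal_gen sm T"
  using x
proof (induction rule: lin_span.induct)
  case zero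
  have "g 0 = 0" using add[of 0 0] by simp
  then show ?case by (simp add: ideal_gen.zero)
qed (simp_all add: add smult gen ideal_gen.add ideal_gen.smult)

lemma LCS_Suc_subset: "LCS sm (Suc k) \<subseteq> LCS sm k"
proof (induction k)
  case (Suc k)
  show ?case
  proof (cases k)
    case (Suc j)
    have "{comm a x |a x. x \<in> LCS sm (Suc (Suc j))} \<subseteq> {comm a x |a x. x \<in> LCS sm (Suc j)}"
      using Suc.IH \<open>k = Suc j\<close> by blast
    then show ?thesis
      unfolding \<open>k = Suc j\<close> LCS.simps using lin_span_mono by blast
  qed simp
qed simp

lemma comm_LCS: "1 \<le> k \<Longrightarrow> x \<in> LCS sm k \<Longrightarrow> comm a x \<in> LCS sm (Suc k)"
  by (cases k) (auto intro: lin_span.gen)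

lemma LCS_subset_MI: "LCS sm k \<subseteq> MI sm k"
  unfolding MI_def by (auto intro: ideal_gen.gen)

lemma two_sided_ideal_MI: "two_sided_ideal (MI sm k)"
  unfolding MI_def by (rule two_sided_ideal_ideal_gen)

lemma double_comm_LCS_in_MI:
  assumes "1 \<le> k" and "l \<in> LCS sm k"
  shows "comm p (comm q l) \<in> MI sm (k + 2)"
proof -
  have "comm p (comm q l) \<in> LCS sm (Suc (Suc k))"
    using assms by (intro comm_LCS) simp_all
  then show ?thesis using LCS_subset_MI by fastforce
qed

lemma MI_subset_lin_span:
  assumes A: "is_algebra sm" and k: "1 \<le> k"
  shows "m \<in> MI sm k \<Longrightarrow> m \<in> lin_span sm {x * l |x l. l \<in> LCS sm k}"
  unfolding MI_def
proof (induction rule: ideal_gen.induct)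
  case (gen l)
  have "1 * l \<in> {x * l |x l. l \<in> LCS sm k}" using gen by blast
  then show ?case by (simp add: lin_span.gen)
next
  case (lmult m a)
  have "a * (x * l) \<in> lin_span sm {x * l |x l. l \<in> LCS sm k}" if "l \<in> LCS sm k" for x l
  proof (rule lin_span.gen)
    show "a * (x * l) \<in> {x * l |x l. l \<in> LCS sm k}"
      using that by (intro CollectI exI[of _ "a * x"] exI[of _ l]) (simp add: mult.assoc)
  qed
  then show ?case using lin_span_mult_left[OF A _ lmult.IH] by blast
next
  case (rmult m a)
  have "x * l * a \<in> lin_span sm {x * l |x l. l \<in> LCS sm k}" if l: "l \<in> LCS sm k" for x l
  proof -
    have "comm (- a) l \<in> LCS sm k"
      using comm_LCS[OF k l] LCS_Suc_subset by blast
    then have "(x * a) * l + x * comm (- a) l \<in> lin_span sm {x * l |x l. l \<in> LCS sm k}"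
      using l by (blast intro: lin_span.add lin_span.gen)
    moreover have "x * l * a = (x * a) * l + x * comm (- a) l"
      by (simp add: comm_def algebra_simps)
    ultimately show ?thesis by simp
  qed
  then show ?case using lin_span_mult_right[OF A _ rmult.IH] by blast
qed (simp_all add: lin_span.intros)

lemma sym_comm_prod_LCS:
  "1 \<le> k \<Longrightarrow> l \<in> LCS sm k \<Longrightarrow> sym_comm_prod a b d l \<in> MI sm (k + 2)"
  by (intro sym_comm_prod_in_ideal two_sided_ideal_MI double_comm_LCS_in_MI)

lemma sym_comm_prod_mult_LCS:
  assumes A: "is_algebra sm" and k: "1 \<le> k" and l: "l \<in> LCS sm k"
  shows "sym_comm_prod a b d x * l \<in> MI sm (k + 2)"
proof (cases k)
  case (Suc j)
  show ?thesis
  proof (cases j)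
    case 0
    then show ?thesis
      using sym_comm_prod_LCS[of 1 x sm a b d] Suc
      by (auto intro: ideal_mult_right two_sided_ideal_MI)
  next
    case (Suc i)
    have triple: "comm p (comm q (comm r v)) \<in> MI sm (k + 2)" if "v \<in> LCS sm j" for p q r v
      using double_comm_LCS_in_MI[of "Suc j"] comm_LCS[of j v sm r] that \<open>k = Suc j\<close> \<open>j = Suc i\<close>
      by simp
    have "l \<in> lin_span sm {comm c v |c v. v \<in> LCS sm j}"
      using l \<open>k = Suc j\<close> \<open>j = Suc i\<close> by simp
    then show ?thesis
      unfolding MI_def
    proof (rule linear_image_lin_span_in_ideal_gen)
      show "\<And>u v. sym_comm_prod a b d x * (u + v) = sym_comm_prod a b d x * u + sym_comm_prod a b d x * v"
        by (simp add: distrib_left)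
      show "\<And>c u. sym_comm_prod a b d x * sm c u = sm c (sym_comm_prod a b d x * u)"
        by (rule sm_mult_left[OF A])
      show "sym_comm_prod a b d x * y \<in> ideal_gen sm (LCS sm (k + 2))"
        if "y \<in> {comm c v |c v. v \<in> LCS sm j}" for y
        using that triple_comm_ideal.sym_comm_prod_mult_comm[OF triple_comm_ideal.intro]
          two_sided_ideal_MI triple unfolding MI_def by blast
    qed
  qed
qed (use k in simp)

lemma sym_comm_prod_MI:
  assumes A: "is_algebra sm" and k: "1 \<le> k" and m: "m \<in> MI sm k"
  shows "sym_comm_prod a b d m \<in> MI sm (k + 2)"
  using MI_subset_lin_span[OF A k m] unfolding MI_def
proof (rule linear_image_lin_span_in_ideal_gen)
  show "sym_comm_prod a b d y \<in> ideal_gen sm (LCS sm (k + 2))"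
    if gen: "y \<in> {x * l |x l. l \<in> LCS sm k}" for y
  proof -
    obtain x l where y: "y = x * l" and l: "l \<in> LCS sm k" using gen by blast
    show ?thesis
      unfolding y sym_comm_prod_mult MI_def[symmetric]
      by (intro ideal_diff ideal_add ideal_mult_left two_sided_ideal_MI
          sym_comm_prod_mult_LCS[OF A k l] sym_comm_prod_LCS[OF k l])
  qed
qed (simp_all add: sym_comm_prod_add sym_comm_prod_sm[OF A])

theorem lemma3p6:
  fixes sm :: "'k::comm_ring_1 \<Rightarrow> 'a::ring_1 \<Rightarrow> 'a"
    and a b d m :: 'a and k :: nat
  assumes "is_algebra sm"
    and "fin_gen sm"
    and "\<exists>N. MI sm N = {0}"
    and "k \<ge> 1"
    and "m \<in> MI sm k"
  shows "comm b d * comm a m + comm a d * comm b m \<in> MI sm (k + 2)"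
  using sym_comm_prod_MI[OF assms(1,4,5)] by (simp add: sym_comm_prod_def)

end
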